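(* Suppose that the condition $V \succ 0,W \succ 0$ is relaxed to $V \succeq 0,W \succeq 0$. Assume that $f$ is a bijection for the given $V \succeq 0,W \succeq 0$. Consider any tuples $(\lambda ,S_k^\lambda ,F_k^\lambda ,P_k^\lambda )_{k = 0}^{N - 1}$ such that $\lambda>0$ and $C(\{ S_k^\lambda \} _{k = 0}^{N - 1} ) = \gamma$. Then, the corresponding $\{(S_k^\lambda,F_k^\lambda)\}_{k=0}^{N-1}$ is an optimal solution of the constrained LQG (covariance selection) problem.
   Context: Consider the stochastic LTI system $x(k+1)=Ax(k)+Bu(k)+w(k)$ with $x(k)\in\mathbb R^n$, $u(k)\in\mathbb R^m$, $x(0)\sim\mathcal N(z,V)$, $w(k)\sim\mathcal N(0,W)$ mutually independent, and linear feedback $u(k)=F_kx(k)$, $k\in\{0,\dots,N-1\}$. With $S_k=\mathbb E([x(k);u(k)][x(k);u(k)]^T)$, the constrained LQG (covariance selection) problem is: minimize $J_p(\{S_k\})=\mathrm{Tr}\big(Q_f([A\ B]S_{N-1}[A\ B]^T+W)\big)+\sum_{k=0}^{N-1}\mathrm{Tr}(\mathrm{diag}(Q_k,R_k)S_k)$ over $\{S_k,F_k\}$ subject to $S_k=\Phi(F_k,S_{k-1})$ ($k=1,\dots,N-1$), $S_0=[I_n;F_0](V+zz^T)[I_n;F_0]^T$, and $C(\{S_k\})\le\gamma$, where $C(\{S_k\})=\mathrm{Tr}\big(\tilde Q_f([A\ B]S_{N-1}[A\ B]^T+W)\big)+\sum_{k=0}^{N-1}\mathrm{Tr}(\mathrm{diag}(\tilde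 Q_k,\tilde R_k)S_k)$ and $\Phi(F,S)=[I_n;F]([A\ B]S[A\ B]^T+W)[I_n;F]^T$. Standing assumptions (other than the relaxed noise condition): $Q_f,\tilde Q_f,Q_k,\tilde Q_k\succeq0$, $R_k+\lambda\tilde R_k\succ0$ for all $k$, $\lambda>0$; strict feasibility of the inequality constraint; $C(\{S_k^0\})>\gamma$. For $\lambda\ge0$, $X_N^\lambda=Q_f+\lambda\tilde Q_f$, $X_k^\lambda=A^TX_{k+1}^\lambda A-A^TX_{k+1}^\lambda B(R_k+\lambda\tilde R_k+B^TX_{k+1}^\lambda B)^{-1}B^TX_{k+1}^\lambda A+Q_k+\lambda\tilde Q_k$, $F_k^\lambda=-(R_k+\lambda\tilde R_k+B^TX_{k+1}^\lambda B)^{-1}B^TX_{k+1}^\lambda A$, $S_0^\lambda=[I;F_0^\lambda](V+zz^T)[I;F_0^\lambda]^T$, $S_k^\lambda=\Phi(F_k^\lambda,S_{k-1}^\lambda)$, $P_k^\lambda=\begin{bmatrix}Q_k+\lambda\tilde Q_k+A^TX_{k+1}^\lambda A & A^TX_{k+1}^\lambda B\\ B^TX_{k+1}^\lambda A & R_k+\lambda\tilde R_k+B^TX_{k+1}^\lambda B\end{bmatrix}$, and $f(\lambda)=C(\{S_k^\lambda\}_{k=0}^{N-1})-\gamma$ (which depends on $V,W$). When $V\succ0,W\succ0$ it was shown that such tuples are exactly the KKT points and are optimal; with only $V\succeq0,W\succeq0$ these tuples still satisfy the KKT conditions but need not be the unique KKT points. *)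

theory Defs
  imports "HOL-Analysis.Analysis"
begin

text \<open>Matrices are rendered as Cartesian-product matrices: state index type 'n,
  input index type 'm, stacked (state;input) index type 'n + 'm.\<close>

definition psd :: "real^'k^'k \<Rightarrow> bool" where
  "psd M \<longleftrightarrow> transpose M = M \<and> (\<forall>x. 0 \<le> x \<bullet> (M *v x))"

definition pd :: "real^'k^'k \<Rightarrow> bool" where
  "pd M \<longleftrightarrow> transpose M = M \<and> (\<forall>x. x \<noteq> 0 \<longrightarrow> 0 < x \<bullet> (M *v x))"

definition AB :: "real^'n^'n \<Rightarrow> real^'m^'n \<Rightarrow> real^('n + 'm)^'n" where
  "AB A B = (\<chi> i j. case j of Inl a \<Rightarrow> A $ i $ a | Inr b \<Rightarrow> B $ i $ b)"

text \<open>The block column [I_n; F].\<close>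
definition IF :: "real^'n^'m \<Rightarrow> real^'n^('n + 'm)" where
  "IF F = (\<chi> i j. case i of Inl a \<Rightarrow> (if a = j then 1 else 0) | Inr b \<Rightarrow> F $ b $ j)"

definition bdiag :: "real^'n^'n \<Rightarrow> real^'m^'m \<Rightarrow> real^('n + 'm)^('n + 'm)" where
  "bdiag Q R = (\<chi> i j. case (i, j) of (Inl a, Inl b) \<Rightarrow> Q $ a $ b
                                   | (Inr a, Inr b) \<Rightarrow> R $ a $ b
                                   | _ \<Rightarrow> 0)"

definition Phi :: "real^'n^'n \<Rightarrow> real^'m^'n \<Rightarrow> real^'n^'n \<Rightarrow> real^'n^'m
                   \<Rightarrow> real^('n + 'm)^('n + 'm) \<Rightarrow> real^('n + 'm)^('n + 'm)" where
  "Phi A B W F S = IF F ** (AB A B ** S ** transpose (AB A B) + W) ** transpose (IF F)"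

definition outer :: "real^'n \<Rightarrow> real^'n^'n" where
  "outer z = (\<chi> i j. z $ i * z $ j)"

text \<open>Generic cost  Tr(Qf([A B] S_{N-1} [A B]^T + W)) + sum_{k<N} Tr(diag(Q_k,R_k) S_k);
  used both for J_p (with Q_f, Q_k, R_k) and for C (with the tilde weights).\<close>
definition cost :: "real^'n^'n \<Rightarrow> real^'m^'n \<Rightarrow> real^'n^'n \<Rightarrow> nat
     \<Rightarrow> real^'n^'n \<Rightarrow> (nat \<Rightarrow> real^'n^'n) \<Rightarrow> (nat \<Rightarrow> real^'m^'m)
     \<Rightarrow> (nat \<Rightarrow> real^('n + 'm)^('n + 'm)) \<Rightarrow> real" where
  "cost A B W N Qf Q R S =
     trace (Qf ** (AB A B ** S (N - 1) ** transpose (AB A B) + W))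
     + (\<Sum>k<N. trace (bdiag (Q k) (R k) ** S k))"

definition feasible where
  "feasible A B W V z N Qft Qt Rt \<gamma> S F \<longleftrightarrow>
     S 0 = IF (F 0) ** (V + outer z) ** transpose (IF (F 0)) \<and>
     (\<forall>k\<in>{1..N-1}. S k = Phi A B W (F k) (S (k - 1))) \<and>
     cost A B W N Qft Qt Rt S \<le> \<gamma>"

definition strictly_feasible where
  "strictly_feasible A B W V z N Qft Qt Rt \<gamma> \<longleftrightarrow>
     (\<exists>S F. S 0 = IF (F 0) ** (V + outer z) ** transpose (IF (F 0)) \<and>
     (\<forall>k\<in>{1..N-1}. S k = Phi A B W (F k) (S (k - 1))) \<and>
     cost A B W N Qft Qt Rt S < \<gamma>)"

definition optimal where
  "optimal A B W V z N Qf Q R Qft Qt Rt \<gamma> S F \<longleftrightarrow>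
     feasible A B W V z N Qft Qt Rt \<gamma> S F \<and>
     (\<forall>S' F'. feasible A B W V z N Qft Qt Rt \<gamma> S' F' \<longrightarrow>
        cost A B W N Qf Q R S \<le> cost A B W N Qf Q R S')"

text \<open>Riccati recursion, indexed by steps-to-go j = N - k:
  Xr 0 = X_N, Xr (Suc j) = X_{N - Suc j}.\<close>
fun Xr :: "real^'n^'n \<Rightarrow> real^'m^'n \<Rightarrow> nat \<Rightarrow> real^'n^'n \<Rightarrow> (nat \<Rightarrow> real^'n^'n)
     \<Rightarrow> (nat \<Rightarrow> real^'m^'m) \<Rightarrow> real^'n^'n \<Rightarrow> (nat \<Rightarrow> real^'n^'n)
     \<Rightarrow> (nat \<Rightarrow> real^'m^'m) \<Rightarrow> real \<Rightarrow> nat \<Rightarrow> real^'n^'n" where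
  "Xr A B N Qf Q R Qft Qt Rt lam 0 = Qf + lam *\<^sub>R Qft"
| "Xr A B N Qf Q R Qft Qt Rt lam (Suc j) =
     (let X = Xr A B N Qf Q R Qft Qt Rt lam j; k = N - Suc j in
      transpose A ** X ** A
      - transpose A ** X ** B ** matrix_inv (R k + lam *\<^sub>R Rt k + transpose B ** X ** B)
          ** transpose B ** X ** A
      + Q k + lam *\<^sub>R Qt k)"

definition Xl where
  "Xl A B N Qf Q R Qft Qt Rt lam k = Xr A B N Qf Q R Qft Qt Rt lam (N - k)"

definition Fl :: "real^'n^'n \<Rightarrow> real^'m^'n \<Rightarrow> nat \<Rightarrow> real^'n^'n \<Rightarrow> (nat \<Rightarrow> real^'n^'n)
     \<Rightarrow> (nat \<Rightarrow> real^'m^'m) \<Rightarrow> real^'n^'n \<Rightarrow> (nat \<Rightarrow> real^'n^'n)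
     \<Rightarrow> (nat \<Rightarrow> real^'m^'m) \<Rightarrow> real \<Rightarrow> nat \<Rightarrow> real^'n^'m" where
  "Fl A B N Qf Q R Qft Qt Rt lam k =
     (let X = Xl A B N Qf Q R Qft Qt Rt lam (Suc k) in
      - (matrix_inv (R k + lam *\<^sub>R Rt k + transpose B ** X ** B) ** transpose B ** X ** A))"

fun Sl where
  "Sl A B W V z N Qf Q R Qft Qt Rt lam 0 =
     IF (Fl A B N Qf Q R Qft Qt Rt lam 0) ** (V + outer z)
        ** transpose (IF (Fl A B N Qf Q R Qft Qt Rt lam 0))"
| "Sl A B W V z N Qf Q R Qft Qt Rt lam (Suc k) =
     Phi A B W (Fl A B N Qf Q R Qft Qt Rt lam (Suc k)) (Sl A B W V z N Qf Q R Qft Qt Rt lam k)"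

definition fl where
  "fl A B W V z N Qf Q R Qft Qt Rt \<gamma> lam =
     cost A B W N Qft Qt Rt (Sl A B W V z N Qf Q R Qft Qt Rt lam) - \<gamma>"

end

theory Submission
  imports Defs
begin

text \<open>For \<open>\<lambda> > 0\<close> the Lagrangian \<open>J_p + \<lambda> C\<close> of any covariance trajectory telescopes along the
  Riccati recursion: completing the square in the gain at every stage gives
  \<open>J_p + \<lambda> C = tr(X_0 \<Sigma>_0) + \<Sum>_k tr(X_(k+1) W) + \<Sum>_k tr((F_k - F_k\<^sup>\<lambda>)\<^sup>T G_k (F_k - F_k\<^sup>\<lambda>) \<Sigma>_k)\<close>
  with \<open>G_k = R_k + \<lambda> Rt_k + B\<^sup>T X_(k+1) B\<close> positive definite and \<open>\<Sigma>_k\<close> the (positive semidefinite)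
  state covariance. The trace of a product of positive semidefinite matrices is nonnegative, so
  the gains \<open>F_k\<^sup>\<lambda>\<close> minimise the Lagrangian over all trajectories, definite noise or not. As
  \<open>C(S\<^sup>\<lambda>) = \<gamma>\<close>, weak duality gives \<open>J_p(S\<^sup>\<lambda>) + \<lambda>\<gamma> \<le> J_p(S) + \<lambda> C(S) \<le> J_p(S) + \<lambda>\<gamma>\<close> for every feasible
  \<open>S\<close>.\<close>

lemma matrix_add_rdistrib: "((A::'a::semiring_1^'n^'m) + B) ** C = A ** C + B ** C"
  by (simp add: matrix_matrix_mult_def vec_eq_iff sum.distrib algebra_simps)

lemma matrix_diff_ldistrib: "(A::'a::ring_1^'n^'m) ** (B - C) = A ** B - A ** C"
  by (simp add: matrix_matrix_mult_def vec_eq_iff sum_subtractf algebra_simps)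

lemma matrix_diff_rdistrib: "((A::'a::ring_1^'n^'m) - B) ** C = A ** C - B ** C"
  by (simp add: matrix_matrix_mult_def vec_eq_iff sum_subtractf algebra_simps)

lemma matrix_mul_uminus_left: "(- (A::'a::ring_1^'n^'m)) ** C = - (A ** C)"
  by (simp add: matrix_matrix_mult_def vec_eq_iff sum_negf)

lemma matrix_mul_uminus_right: "(A::'a::ring_1^'n^'m) ** (- C) = - (A ** C)"
  by (simp add: matrix_matrix_mult_def vec_eq_iff sum_negf)

lemma matrix_mul_scaleR_left: "(c *\<^sub>R (A::real^'n^'m)) ** C = c *\<^sub>R (A ** C)"
  by (simp add: matrix_matrix_mult_def vec_eq_iff sum_distrib_left algebra_simps)

lemma matrix_mul_scaleR_right: "(A::real^'n^'m) ** (c *\<^sub>R C) = c *\<^sub>R (A ** C)"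
  by (simp add: matrix_matrix_mult_def vec_eq_iff sum_distrib_left algebra_simps)

lemma matrix_mul_rzero: "(A::'a::semiring_1^'n^'m) ** (0::'a^'k^'n) = 0"
  by (simp add: matrix_matrix_mult_def vec_eq_iff)

lemma matrix_mul_lzero: "(0::'a::semiring_1^'n^'m) ** (A::'a^'k^'n) = 0"
  by (simp add: matrix_matrix_mult_def vec_eq_iff)

lemma transpose_add: "transpose ((A::'a::semiring_1^'n^'m) + B) = transpose A + transpose B"
  by (simp add: transpose_def vec_eq_iff)

lemma transpose_diff: "transpose ((A::'a::ring_1^'n^'m) - B) = transpose A - transpose B"
  by (simp add: transpose_def vec_eq_iff)

lemma transpose_uminus: "transpose (- (A::'a::ring_1^'n^'m)) = - transpose A"
  by (simp add: transpose_def vec_eq_iff)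

lemma transpose_zero: "transpose (0::'a::semiring_1^'n^'m) = 0"
  by (simp add: transpose_def vec_eq_iff)

lemma trace_scaleR: "trace (c *\<^sub>R (A::real^'n^'n)) = c * trace A"
  by (simp add: trace_def sum_distrib_left)

lemma trace_zero: "trace (0::'a::semiring_1^'n^'n) = 0"
  by (simp add: trace_def)

lemmas matrix_ring_simps =
  matrix_add_ldistrib matrix_add_rdistrib matrix_diff_ldistrib matrix_diff_rdistrib
  matrix_mul_uminus_left matrix_mul_uminus_right matrix_mul_scaleR_left matrix_mul_scaleR_right
  matrix_mul_rzero matrix_mul_lzero transpose_add transpose_diff transpose_uminus transpose_zero
  matrix_transpose_mul transpose_scalar

lemma sum_UNIV_Plus:
  "sum (f :: 'a::finite + 'b::finite \<Rightarrow> 'c::comm_monoid_add) UNIV = (\<Sum>a\<in>UNIV. f (Inl a)) + (\<Sum>b\<in>UNIV. f (Inr b))"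
  using sum.Plus[of "UNIV :: 'a set" "UNIV :: 'b set" f] by (simp add: comp_def)

lemma AB_mult_IF: "AB A B ** IF F = A + B ** F"
  by (simp add: matrix_matrix_mult_def vec_eq_iff AB_def IF_def sum_UNIV_Plus if_distrib cong: if_cong)

lemma transpose_IF_bdiag_IF: "transpose (IF F) ** bdiag Q R ** IF F = Q + transpose F ** R ** F"
  by (simp add: matrix_matrix_mult_def vec_eq_iff bdiag_def IF_def transpose_def sum_UNIV_Plus
      if_distrib if_distribR sum_distrib_left sum_distrib_right split: sum.split cong: if_cong)

section \<open>Positive semidefinite matrices\<close>

lemma psd_symmetric: "psd M \<Longrightarrow> transpose M = M"
  by (simp add: psd_def)

lemma psd_nonneg: "psd M \<Longrightarrow> 0 \<le> x \<bullet> (M *v x)"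
  by (simp add: psd_def)

lemma pd_imp_psd: "pd M \<Longrightarrow> psd M"
  unfolding pd_def psd_def by (metis inner_zero_left order.refl less_imp_le)

lemma psd_add: "psd M \<Longrightarrow> psd P \<Longrightarrow> psd (M + P)"
  unfolding psd_def by (simp add: transpose_add matrix_vector_mult_add_rdistrib inner_add_right)

lemma psd_scaleR: "psd M \<Longrightarrow> 0 \<le> c \<Longrightarrow> psd (c *\<^sub>R M)"
  unfolding psd_def by (simp add: transpose_scalar scaleR_matrix_vector_assoc[symmetric])

lemma pd_add_psd: "pd M \<Longrightarrow> psd P \<Longrightarrow> pd (M + P)"
  unfolding psd_def pd_def
  by (simp add: transpose_add matrix_vector_mult_add_rdistrib inner_add_right add_pos_nonneg)

lemma quadratic_form_congruence:
  "x \<bullet> ((transpose C ** M ** C) *v x) = (C *v x) \<bullet> (M *v (C *v x))"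
  for M :: "real^'k^'k" and C :: "real^'j^'k"
  by (metis dot_lmul_matrix inner_commute transpose_matrix_vector matrix_vector_mul_assoc matrix_mul_assoc)

lemma psd_congruence: "psd M \<Longrightarrow> psd (transpose C ** M ** C)"
  unfolding psd_def quadratic_form_congruence
  by (simp add: matrix_transpose_mul matrix_mul_assoc)

lemma psd_congruence': "psd M \<Longrightarrow> psd (C ** M ** transpose C)"
  using psd_congruence[of M "transpose C"] by simp

lemma quadratic_form_bdiag:
  "x \<bullet> (bdiag Q R *v x) =
     (\<chi> a. x $ Inl a) \<bullet> (Q *v (\<chi> a. x $ Inl a)) + (\<chi> b. x $ Inr b) \<bullet> (R *v (\<chi> b. x $ Inr b))"
  by (simp add: inner_vec_def bdiag_def matrix_vector_mult_def sum_UNIV_Plus)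

lemma psd_bdiag: "psd Q \<Longrightarrow> psd R \<Longrightarrow> psd (bdiag Q R)"
  unfolding psd_def quadratic_form_bdiag
  by (auto simp: bdiag_def transpose_def vec_eq_iff split: sum.split)

lemma quadratic_form_outer: "x \<bullet> (outer z *v x) = (z \<bullet> x)\<^sup>2"
  by (simp add: inner_vec_def outer_def matrix_vector_mult_def power2_eq_square
      sum_distrib_left sum_distrib_right mult_ac)

lemma psd_outer: "psd (outer z)"
  unfolding psd_def quadratic_form_outer by (simp add: outer_def transpose_def vec_eq_iff mult.commute)

lemma trace_mult_outer: "trace (P ** outer v) = v \<bullet> (P *v v)"
  by (simp add: trace_def matrix_matrix_mult_def outer_def inner_vec_def matrix_vector_mult_def
      sum_distrib_left mult_ac)

lemma pd_invertible: "pd G \<Longrightarrow> invertible G"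
  unfolding pd_def
  by (metis inner_zero_right less_irrefl matrix_left_invertible_ker invertible_left_inverse)

lemma pd_matrix_inv_right: "pd G \<Longrightarrow> G ** matrix_inv G = mat 1"
  using pd_invertible unfolding invertible_def matrix_inv_def by (metis (mono_tags, lifting) someI_ex)

lemma psd_cauchy_schwarz:
  fixes Q :: "real^'k^'k"
  assumes "psd Q"
  shows "(e \<bullet> (Q *v x))\<^sup>2 \<le> (e \<bullet> (Q *v e)) * (x \<bullet> (Q *v x))"
proof -
  define b where "b = e \<bullet> (Q *v x)"
  define q where "q = e \<bullet> (Q *v e)"
  define c where "c = x \<bullet> (Q *v x)"
  have "x \<bullet> (Q *v e) = b"
    unfolding b_def using psd_symmetric[OF assms]
    by (metis dot_lmul_matrix inner_commute transpose_matrix_vector)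
  then have nonneg: "0 \<le> c + 2 * t * b + t\<^sup>2 * q" for t
    using psd_nonneg[OF assms, of "x + t *\<^sub>R e"] unfolding b_def q_def c_def
    by (simp add: matrix_vector_right_distrib matrix_vector_mult_scaleR inner_add_left inner_add_right
        power2_eq_square algebra_simps)
  show ?thesis
  proof (cases "q = 0")
    case True
    have "b = 0"
    proof (rule ccontr)
      assume "b \<noteq> 0"
      then have "c + 2 * (- (c + 1) / (2 * b)) * b = -1" by (simp add: field_simps)
      then show False using nonneg[of "- (c + 1) / (2 * b)"] True by simp
    qed
    then show ?thesis using True unfolding b_def q_def by simp
  next
    case False
    then have "0 < q" using psd_nonneg[OF assms] unfolding q_def by (simp add: order_less_le)
    have "c + 2 * (- b / q) * b + (- b / q)\<^sup>2 * q = c - b\<^sup>2 / q"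
      using False by (simp add: field_simps power2_eq_square)
    then have "b\<^sup>2 / q \<le> c" using nonneg[of "- b / q"] by simp
    then show ?thesis using \<open>0 < q\<close> unfolding b_def q_def c_def by (simp add: field_simps)
  qed
qed

lemma quadratic_form_axis: "axis a 1 \<bullet> ((Q::real^'k^'k) *v x) = (\<Sum>j\<in>UNIV. Q$a$j * x$j)"
  by (simp add: inner_vec_def axis_def matrix_vector_mult_def if_distrib if_distribR cong: if_cong)

lemma quadratic_form_axis_axis: "axis a 1 \<bullet> ((Q::real^'k^'k) *v axis b 1) = Q$a$b"
  unfolding quadratic_form_axis by (simp add: axis_def if_distrib cong: if_cong)

lemma psd_diag_nonneg: "psd Q \<Longrightarrow> 0 \<le> Q$i$i"
  using psd_nonneg[of Q "axis i 1"] by (simp add: quadratic_form_axis_axis)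

text \<open>One step of a Cholesky-type elimination. When \<open>Q$a$a = 0\<close> the junk value \<open>1 / 0 = 0\<close>
  leaves \<open>Q\<close> unchanged; row and column \<open>a\<close> then vanish already, by Cauchy-Schwarz.\<close>
lemma psd_eliminate_index:
  fixes Q :: "real^'k^'k" and a :: 'k
  assumes Q: "psd Q"
  defines "Q' \<equiv> Q - (1 / Q$a$a) *\<^sub>R outer (column a Q)"
  shows "psd Q'" and "Q'$a$j = 0" and "Q'$j$a = 0"
proof -
  define q where "q = Q$a$a"
  define v where "v = column a Q"
  have sym: "Q$i$j = Q$j$i" for i j
    using psd_symmetric[OF Q] by (metis transpose_def vec_lambda_beta)
  have v_inner: "v \<bullet> x = axis a 1 \<bullet> (Q *v x)" for x
    unfolding quadratic_form_axis unfolding v_def column_def inner_vec_def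
    by (rule sum.cong) (auto simp: sym[of _ a] mult.commute)
  have q_axis: "q = axis a 1 \<bullet> (Q *v axis a 1)"
    unfolding quadratic_form_axis_axis q_def ..
  have cs: "(v \<bullet> x)\<^sup>2 \<le> q * (x \<bullet> (Q *v x))" for x
    using psd_cauchy_schwarz[OF Q, of "axis a 1" x] unfolding v_inner q_axis .
  have q_nonneg: "0 \<le> q"
    unfolding q_def using psd_diag_nonneg[OF Q] .
  have entry: "Q'$i$j = Q$i$j - (1 / q) * (Q$i$a * Q$j$a)" for i j
    by (simp add: Q'_def q_def outer_def column_def)
  show "psd Q'"
    unfolding psd_def
  proof (intro conjI allI)
    show "transpose Q' = Q'"
      unfolding Q'_def
      by (simp add: transpose_diff transpose_scalar psd_symmetric[OF Q] psd_symmetric[OF psd_outer])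
    fix x
    have "(1 / q) * (v \<bullet> x)\<^sup>2 \<le> x \<bullet> (Q *v x)"
      using cs[of x] psd_nonneg[OF Q, of x] q_nonneg
      by (cases "q = 0") (simp_all add: field_simps)
    then show "0 \<le> x \<bullet> (Q' *v x)"
      unfolding Q'_def q_def[symmetric] v_def[symmetric]
      by (simp add: matrix_vector_mult_diff_rdistrib scaleR_matrix_vector_assoc[symmetric] inner_diff_right
          quadratic_form_outer)
  qed
  have "Q$a$j = 0" if "q = 0" for j
    using cs[of "axis j 1"] that
    by (simp add: v_inner quadratic_form_axis_axis)
  then show "Q'$a$j = 0" and "Q'$j$a = 0"
    by (cases "q = 0"; simp add: entry sym[of j a] q_def)+
qed

lemma trace_mult_psd_nonneg_supported:
  fixes P Q :: "real^'k^'k"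
  assumes "psd P" and "finite I" and "psd Q" and "\<forall>i j. i \<notin> I \<or> j \<notin> I \<longrightarrow> Q$i$j = 0"
  shows "0 \<le> trace (P ** Q)"
  using assms(2-)
proof (induction I arbitrary: Q rule: finite_induct)
  case empty
  then have "Q = 0" by (simp add: vec_eq_iff)
  then show ?case by (simp add: matrix_mul_rzero trace_zero)
next
  case (insert a I)
  define Q' where "Q' = Q - (1 / Q$a$a) *\<^sub>R outer (column a Q)"
  have entry: "Q'$i$j = Q$i$j - (1 / Q$a$a) * (Q$i$a * Q$j$a)" for i j
    by (simp add: Q'_def outer_def column_def)
  have "\<forall>i j. i \<notin> I \<or> j \<notin> I \<longrightarrow> Q'$i$j = 0"
  proof (intro allI impI)
    fix i j assume ij: "i \<notin> I \<or> j \<notin> I"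
    show "Q'$i$j = 0"
    proof (cases "i = a \<or> j = a")
      case True
      then show ?thesis using psd_eliminate_index(2,3)[OF insert.prems(1), of a] unfolding Q'_def by blast
    next
      case False
      then have "Q$i$j = 0" and "Q$i$a * Q$j$a = 0"
        using ij insert.prems(2) by auto
      then show ?thesis unfolding entry by simp
    qed
  qed
  then have "0 \<le> trace (P ** Q')"
    using insert.IH psd_eliminate_index(1)[OF insert.prems(1)] unfolding Q'_def by blast
  moreover have "0 \<le> (1 / Q$a$a) * trace (P ** outer (column a Q))"
    unfolding trace_mult_outer
    using psd_diag_nonneg[OF insert.prems(1)] psd_nonneg[OF \<open>psd P\<close>] by simp
  ultimately show ?case
    unfolding Q'_def by (simp add: matrix_diff_ldistrib matrix_mul_scaleR_right trace_sub trace_scaleR)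
qed

lemma trace_mult_psd_nonneg:
  fixes P Q :: "real^'k^'k"
  assumes "psd P" and "psd Q"
  shows "0 \<le> trace (P ** Q)"
  using trace_mult_psd_nonneg_supported[OF assms(1) _ assms(2), of UNIV] by simp

section \<open>The Riccati recursion\<close>

definition riccati_step ::
    "real^'n^'n \<Rightarrow> real^'m^'n \<Rightarrow> real^'n^'n \<Rightarrow> real^'m^'m \<Rightarrow> real^'n^'n \<Rightarrow> real^'n^'n" where
  "riccati_step A B Q R X =
     transpose A ** X ** A
     - transpose A ** X ** B ** matrix_inv (R + transpose B ** X ** B) ** transpose B ** X ** A + Q"

definition riccati_gain :: "real^'n^'n \<Rightarrow> real^'m^'n \<Rightarrow> real^'m^'m \<Rightarrow> real^'n^'n \<Rightarrow> real^'n^'m" where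
  "riccati_gain A B R X = - (matrix_inv (R + transpose B ** X ** B) ** transpose B ** X ** A)"

lemma riccati_completion_of_squares:
  fixes A X Q :: "real^'n^'n" and B :: "real^'m^'n" and R :: "real^'m^'m" and F :: "real^'n^'m"
  assumes X: "transpose X = X" and G: "pd (R + transpose B ** X ** B)"
  defines "K \<equiv> riccati_gain A B R X"
  shows "transpose (IF F) ** bdiag Q R ** IF F + transpose (AB A B ** IF F) ** X ** (AB A B ** IF F)
    = riccati_step A B Q R X + transpose (F - K) ** (R + transpose B ** X ** B) ** (F - K)"
proof -
  define G where "G = R + transpose B ** X ** B"
  define Gi where "Gi = matrix_inv G"
  have K: "K = - (Gi ** transpose B ** X ** A)"
    unfolding K_def riccati_gain_def Gi_def G_def ..
  have G_sym: "transpose G = G"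
    using G unfolding G_def pd_def by blast
  have GK: "G ** K = - (transpose B ** X ** A)"
    unfolding K using pd_matrix_inv_right[OF G]
    by (simp add: G_def Gi_def matrix_mul_uminus_right matrix_mul_assoc)
  then have KG: "transpose K ** G = - (transpose A ** X ** B)"
    using G_sym X
    by (metis matrix_transpose_mul transpose_uminus transpose_transpose matrix_mul_assoc)
  have KGK: "transpose K ** G ** K = transpose A ** X ** B ** Gi ** transpose B ** X ** A"
    unfolding KG unfolding K by (simp add: matrix_mul_uminus_left matrix_mul_uminus_right matrix_mul_assoc)
  have closed_loop: "transpose (AB A B ** IF F) ** X ** (AB A B ** IF F) =
     transpose A ** X ** A + transpose A ** X ** B ** F + transpose F ** transpose B ** X ** A
     + transpose F ** transpose B ** X ** B ** F"
    unfolding AB_mult_IF by (simp add: matrix_ring_simps matrix_mul_assoc algebra_simps)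
  have square: "transpose (F - K) ** G ** (F - K) =
     transpose F ** G ** F - transpose F ** (G ** K) - (transpose K ** G) ** F + transpose K ** G ** K"
    by (simp add: matrix_ring_simps matrix_mul_assoc algebra_simps)
  have "transpose F ** G ** F = transpose F ** R ** F + transpose F ** transpose B ** X ** B ** F"
    unfolding G_def by (simp add: matrix_ring_simps matrix_mul_assoc)
  then show ?thesis
    unfolding G_def[symmetric] transpose_IF_bdiag_IF closed_loop square GK KG KGK riccati_step_def Gi_def
    by (simp add: K Gi_def matrix_ring_simps matrix_mul_assoc algebra_simps)
qed

lemma riccati_step_psd:
  assumes "psd X" and "psd Q" and "pd R"
  shows "psd (riccati_step A B Q R X)"
proof -
  have G: "pd (R + transpose B ** X ** B)"
    using assms by (simp add: pd_add_psd psd_congruence)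
  define K where "K = riccati_gain A B R X"
  have "riccati_step A B Q R X =
      transpose (IF K) ** bdiag Q R ** IF K + transpose (AB A B ** IF K) ** X ** (AB A B ** IF K)"
    using riccati_completion_of_squares[OF psd_symmetric[OF \<open>psd X\<close>] G, where A=A and Q=Q and F=K]
    by (simp add: K_def matrix_mul_rzero matrix_mul_lzero transpose_zero)
  then show ?thesis
    using assms by (simp add: psd_add psd_congruence psd_bdiag pd_imp_psd)
qed

lemma Xl_N: "Xl A B N Qf Q R Qft Qt Rt lam N = Qf + lam *\<^sub>R Qft"
  by (simp add: Xl_def)

lemma Xr_Suc_riccati_step:
  "Xr A B N Qf Q R Qft Qt Rt lam (Suc j) =
     riccati_step A B (Q (N - Suc j) + lam *\<^sub>R Qt (N - Suc j)) (R (N - Suc j) + lam *\<^sub>R Rt (N - Suc j))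
       (Xr A B N Qf Q R Qft Qt Rt lam j)"
  by (simp add: riccati_step_def Let_def add.assoc)

lemma Xl_riccati_step:
  assumes "k < N"
  shows "Xl A B N Qf Q R Qft Qt Rt lam k =
     riccati_step A B (Q k + lam *\<^sub>R Qt k) (R k + lam *\<^sub>R Rt k) (Xl A B N Qf Q R Qft Qt Rt lam (Suc k))"
proof -
  have "N - k = Suc (N - Suc k)" and "N - Suc (N - Suc k) = k"
    using assms by simp_all
  then show ?thesis
    unfolding Xl_def by (metis Xr_Suc_riccati_step)
qed

lemma Fl_riccati_gain:
  "Fl A B N Qf Q R Qft Qt Rt lam k = riccati_gain A B (R k + lam *\<^sub>R Rt k) (Xl A B N Qf Q R Qft Qt Rt lam (Suc k))"
  by (simp add: Fl_def riccati_gain_def Let_def)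

lemma trace_stage_cost:
  fixes D :: "real^'k^'k" and I :: "real^'n^'k" and M :: "real^'k^'j" and \<Sigma> :: "real^'n^'n"
    and X W :: "real^'j^'j"
  shows "trace (D ** (I ** \<Sigma> ** transpose I)) + trace (X ** (M ** (I ** \<Sigma> ** transpose I) ** transpose M + W))
    = trace ((transpose I ** D ** I + transpose (M ** I) ** X ** (M ** I)) ** \<Sigma>) + trace (X ** W)"
proof -
  have "trace (D ** (I ** \<Sigma> ** transpose I)) = trace ((transpose I ** D ** I) ** \<Sigma>)"
    using trace_mul_sym[of "D ** I ** \<Sigma>" "transpose I"] by (simp add: matrix_mul_assoc)
  moreover have "trace (X ** (M ** (I ** \<Sigma> ** transpose I) ** transpose M))
      = trace ((transpose (M ** I) ** X ** (M ** I)) ** \<Sigma>)"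
    using trace_mul_sym[of "X ** (M ** I) ** \<Sigma>" "transpose (M ** I)"]
    by (simp add: matrix_mul_assoc matrix_transpose_mul)
  ultimately show ?thesis
    by (simp add: matrix_add_ldistrib matrix_add_rdistrib trace_add)
qed

lemma cost_add_scaled:
  "cost A B W N Qf Q R S + c * cost A B W N Qft Qt Rt S =
   cost A B W N (Qf + c *\<^sub>R Qft) (\<lambda>k. Q k + c *\<^sub>R Qt k) (\<lambda>k. R k + c *\<^sub>R Rt k) S"
proof -
  have "bdiag (Q k + c *\<^sub>R Qt k) (R k + c *\<^sub>R Rt k) = bdiag (Q k) (R k) + c *\<^sub>R bdiag (Qt k) (Rt k)" for k
    by (simp add: bdiag_def vec_eq_iff split: sum.split)
  then show ?thesis
    unfolding cost_def
    by (simp add: matrix_add_rdistrib matrix_mul_scaleR_left trace_add trace_scaleR sum.distrib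
        sum_distrib_left algebra_simps)
qed

definition covariance_trajectory ::
    "real^'n^'n \<Rightarrow> real^'m^'n \<Rightarrow> real^'n^'n \<Rightarrow> real^'n^'n \<Rightarrow> nat
     \<Rightarrow> (nat \<Rightarrow> real^('n + 'm)^('n + 'm)) \<Rightarrow> (nat \<Rightarrow> real^'n^'m) \<Rightarrow> bool" where
  "covariance_trajectory A B W \<Sigma>\<^sub>0 N S F \<longleftrightarrow>
     S 0 = IF (F 0) ** \<Sigma>\<^sub>0 ** transpose (IF (F 0)) \<and>
     (\<forall>k\<in>{1..N-1}. S k = Phi A B W (F k) (S (k - 1)))"

text \<open>\<open>E(x(k) x(k)\<^sup>T)\<close>; the joint moment \<open>S k\<close> of \<open>(x(k); u(k))\<close> arises from it through \<open>IF (F k)\<close>.\<close>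
definition state_covariance ::
    "real^'n^'n \<Rightarrow> real^'m^'n \<Rightarrow> real^'n^'n \<Rightarrow> real^'n^'n
     \<Rightarrow> (nat \<Rightarrow> real^('n + 'm)^('n + 'm)) \<Rightarrow> nat \<Rightarrow> real^'n^'n" where
  "state_covariance A B W \<Sigma>\<^sub>0 S k =
     (if k = 0 then \<Sigma>\<^sub>0 else AB A B ** S (k - 1) ** transpose (AB A B) + W)"

lemma feasible_iff_covariance_trajectory:
  "feasible A B W V z N Qft Qt Rt \<gamma> S F \<longleftrightarrow>
     covariance_trajectory A B W (V + outer z) N S F \<and> cost A B W N Qft Qt Rt S \<le> \<gamma>"
  unfolding feasible_def covariance_trajectory_def by blast

lemma covariance_trajectory_Sl:
  "covariance_trajectory A B W (V + outer z) N
     (Sl A B W V z N Qf Q R Qft Qt Rt lam) (Fl A B N Qf Q R Qft Qt Rt lam)"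
proof -
  have "Sl A B W V z N Qf Q R Qft Qt Rt lam k =
      Phi A B W (Fl A B N Qf Q R Qft Qt Rt lam k) (Sl A B W V z N Qf Q R Qft Qt Rt lam (k - 1))"
    if "k \<ge> 1" for k
    using that by (cases k) simp_all
  then show ?thesis by (simp add: covariance_trajectory_def)
qed

lemma covariance_trajectory_state_covariance:
  assumes "covariance_trajectory A B W \<Sigma>\<^sub>0 N S F" and "k < N"
  shows "S k = IF (F k) ** state_covariance A B W \<Sigma>\<^sub>0 S k ** transpose (IF (F k))"
  using assms by (cases k) (auto simp: covariance_trajectory_def state_covariance_def Phi_def)

lemma state_covariance_psd:
  assumes "psd \<Sigma>\<^sub>0" and "psd W" and "covariance_trajectory A B W \<Sigma>\<^sub>0 N S F"
  shows "k < N \<Longrightarrow> psd (state_covariance A B W \<Sigma>\<^sub>0 S k)"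
proof (induction k)
  case 0
  then show ?case using assms(1) by (simp add: state_covariance_def)
next
  case (Suc k)
  then have "psd (S k)"
    using covariance_trajectory_state_covariance[OF assms(3), of k] by (simp add: psd_congruence')
  then show ?case using assms(2) by (simp add: state_covariance_def psd_add psd_congruence')
qed

section \<open>The Lagrangian for a fixed multiplier\<close>

locale lqg_lagrangian =
  fixes A :: "real^'n^'n" and B :: "real^'m^'n" and W :: "real^'n^'n" and N :: nat
    and Qf Qft :: "real^'n^'n" and Q Qt :: "nat \<Rightarrow> real^'n^'n"
    and R Rt :: "nat \<Rightarrow> real^'m^'m" and lam :: real
  assumes Qf: "psd Qf" and Qft: "psd Qft"
    and Qk: "\<forall>k. psd (Q k)" and Qtk: "\<forall>k. psd (Qt k)"
    and Rk: "\<forall>k. \<forall>mu>0. pd (R k + mu *\<^sub>R Rt k)"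
    and lam: "lam > 0"
begin

abbreviation "X \<equiv> Xl A B N Qf Q R Qft Qt Rt lam"
abbreviation "K \<equiv> Fl A B N Qf Q R Qft Qt Rt lam"
abbreviation "G k \<equiv> R k + lam *\<^sub>R Rt k + transpose B ** X (Suc k) ** B"
abbreviation "lagrangian_cost \<equiv>
  cost A B W N (Qf + lam *\<^sub>R Qft) (\<lambda>k. Q k + lam *\<^sub>R Qt k) (\<lambda>k. R k + lam *\<^sub>R Rt k)"

lemma Xl_psd: "psd (X k)"
proof -
  have "psd (Xr A B N Qf Q R Qft Qt Rt lam j)" for j
  proof (induction j)
    case 0
    show ?case using Qf Qft lam by (simp add: psd_add psd_scaleR)
  next
    case (Suc j)
    then show ?case
      unfolding Xr_Suc_riccati_step using Qk Qtk Rk lam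
      by (simp add: riccati_step_psd psd_add psd_scaleR)
  qed
  then show ?thesis by (simp add: Xl_def)
qed

lemma gain_weight_pd: "pd (G k)"
  using Rk lam Xl_psd by (simp add: pd_add_psd psd_congruence)

lemma stage_cost_completion:
  assumes "k < N"
  shows "trace (bdiag (Q k + lam *\<^sub>R Qt k) (R k + lam *\<^sub>R Rt k) ** (IF F ** \<Sigma> ** transpose (IF F)))
     + trace (X (Suc k) ** (AB A B ** (IF F ** \<Sigma> ** transpose (IF F)) ** transpose (AB A B) + W))
   = trace (X k ** \<Sigma>) + trace (X (Suc k) ** W) + trace (transpose (F - K k) ** G k ** (F - K k) ** \<Sigma>)"
  unfolding trace_stage_cost Xl_riccati_step[OF assms] Fl_riccati_gain
    riccati_completion_of_squares[OF psd_symmetric[OF Xl_psd] gain_weight_pd]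
  by (simp add: matrix_add_rdistrib trace_add)

lemma lagrangian_cost_decomposition:
  assumes N: "N \<ge> 1" and S: "covariance_trajectory A B W \<Sigma>\<^sub>0 N S F"
  shows "lagrangian_cost S = trace (X 0 ** \<Sigma>\<^sub>0) + (\<Sum>k<N. trace (X (Suc k) ** W))
     + (\<Sum>k<N. trace (transpose (F k - K k) ** G k ** (F k - K k) ** state_covariance A B W \<Sigma>\<^sub>0 S k))"
proof -
  let ?\<Sigma> = "state_covariance A B W \<Sigma>\<^sub>0 S"
  let ?e = "\<lambda>k. trace (transpose (F k - K k) ** G k ** (F k - K k) ** ?\<Sigma> k)"
  have \<Sigma>_Suc: "?\<Sigma> (Suc k) = AB A B ** S k ** transpose (AB A B) + W" for k
    by (simp add: state_covariance_def)
  have stage: "trace (bdiag (Q k + lam *\<^sub>R Qt k) (R k + lam *\<^sub>R Rt k) ** S k)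
      = (trace (X k ** ?\<Sigma> k) - trace (X (Suc k) ** ?\<Sigma> (Suc k))) + (trace (X (Suc k) ** W) + ?e k)"
    if "k < N" for k
    using stage_cost_completion[OF that, of "F k" "?\<Sigma> k"]
    unfolding \<Sigma>_Suc covariance_trajectory_state_covariance[OF S that, symmetric] by simp
  have "(\<Sum>k<N. trace (bdiag (Q k + lam *\<^sub>R Qt k) (R k + lam *\<^sub>R Rt k) ** S k))
      = (\<Sum>k<N. trace (X k ** ?\<Sigma> k) - trace (X (Suc k) ** ?\<Sigma> (Suc k)))
        + (\<Sum>k<N. trace (X (Suc k) ** W)) + (\<Sum>k<N. ?e k)"
    using stage by (simp add: sum.distrib)
  also have "(\<Sum>k<N. trace (X k ** ?\<Sigma> k) - trace (X (Suc k) ** ?\<Sigma> (Suc k)))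
      = trace (X 0 ** \<Sigma>\<^sub>0) - trace (X N ** ?\<Sigma> N)"
    by (subst sum_lessThan_telescope') (simp add: state_covariance_def)
  finally show ?thesis
    using N \<Sigma>_Suc[of "N - 1"] by (simp add: cost_def Xl_N)
qed

lemma lagrangian_cost_minimal:
  assumes N: "N \<ge> 1" and V: "psd V" and W: "psd W"
    and S: "covariance_trajectory A B W (V + outer z) N S F"
  shows "lagrangian_cost (Sl A B W V z N Qf Q R Qft Qt Rt lam) \<le> lagrangian_cost S"
proof -
  have \<Sigma>\<^sub>0: "psd (V + outer z)"
    using V psd_outer psd_add by blast
  have "0 \<le> trace (transpose (F k - K k) ** G k ** (F k - K k) ** state_covariance A B W (V + outer z) S k)"
    if "k < N" for k
    using trace_mult_psd_nonneg[OF psd_congruence[OF pd_imp_psd[OF gain_weight_pd]]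
        state_covariance_psd[OF \<Sigma>\<^sub>0 W S that]] .
  then have "0 \<le> (\<Sum>k<N. trace (transpose (F k - K k) ** G k ** (F k - K k)
      ** state_covariance A B W (V + outer z) S k))"
    by (rule sum_nonneg) simp
  then show ?thesis
    using lagrangian_cost_decomposition[OF N S]
      lagrangian_cost_decomposition[OF N covariance_trajectory_Sl[of A B W V z N Qf Q R Qft Qt Rt lam]]
    by (simp add: matrix_mul_lzero matrix_mul_rzero transpose_zero trace_zero)
qed

end

theorem proposition7:
  fixes A :: "real^'n^'n" and B :: "real^'m^'n"
    and V W :: "real^'n^'n" and z :: "real^'n"
    and N :: nat and \<gamma> :: real
    and Qf Qft :: "real^'n^'n" and Q Qt :: "nat \<Rightarrow> real^'n^'n"
    and R Rt :: "nat \<Rightarrow> real^'m^'m" and lam :: real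
  assumes N: "N \<ge> 1"
    and V: "psd V" and W: "psd W"
    and Qf: "psd Qf" and Qft: "psd Qft"
    and Qk: "\<forall>k. psd (Q k)" and Qtk: "\<forall>k. psd (Qt k)"
    and Rk: "\<forall>k. \<forall>mu>0. pd (R k + mu *\<^sub>R Rt k)"
    and strict: "strictly_feasible A B W V z N Qft Qt Rt \<gamma>"
    and C0: "cost A B W N Qft Qt Rt (Sl A B W V z N Qf Q R Qft Qt Rt 0) > \<gamma>"
    and bij: "inj_on (fl A B W V z N Qf Q R Qft Qt Rt \<gamma>) {0..}"
    and lam: "lam > 0"
    and act: "cost A B W N Qft Qt Rt (Sl A B W V z N Qf Q R Qft Qt Rt lam) = \<gamma>"
  shows "optimal A B W V z N Qf Q R Qft Qt Rt \<gamma>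
           (Sl A B W V z N Qf Q R Qft Qt Rt lam) (Fl A B N Qf Q R Qft Qt Rt lam)"
proof -
  interpret lqg_lagrangian A B W N Qf Qft Q Qt R Rt lam
    using Qf Qft Qk Qtk Rk lam by unfold_locales
  let ?S = "Sl A B W V z N Qf Q R Qft Qt Rt lam"
  have "cost A B W N Qf Q R ?S \<le> cost A B W N Qf Q R S'"
    if "feasible A B W V z N Qft Qt Rt \<gamma> S' F'" for S' F'
  proof -
    from that have S': "covariance_trajectory A B W (V + outer z) N S' F'"
      and C': "cost A B W N Qft Qt Rt S' \<le> \<gamma>"
      by (simp_all add: feasible_iff_covariance_trajectory)
    have "cost A B W N Qf Q R ?S + lam * \<gamma> = lagrangian_cost ?S"
      using cost_add_scaled[of A B W N Qf Q R ?S lam Qft Qt Rt] by (simp only: act)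
    also have "\<dots> \<le> lagrangian_cost S'"
      using lagrangian_cost_minimal[OF N V W S'] .
    also have "\<dots> \<le> cost A B W N Qf Q R S' + lam * \<gamma>"
      using cost_add_scaled[of A B W N Qf Q R S' lam Qft Qt Rt] mult_left_mono[OF C' less_imp_le[OF lam]]
      by simp
    finally show ?thesis by simp
  qed
  moreover have "feasible A B W V z N Qft Qt Rt \<gamma> ?S (Fl A B N Qf Q R Qft Qt Rt lam)"
    using covariance_trajectory_Sl act by (simp add: feasible_iff_covariance_trajectory)
  ultimately show ?thesis
    unfolding optimal_def by blast
qed

end
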